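(* Let $\mathcal{C}$ be a (positive) monopole and let $(\mathcal{H},\mathcal{E},U)$ be a capacitor for $\mathcal{C}$. The following are equivalent: (1) the positive monopole $\mathcal{C}$ has enough injectives; (2) every object of $\mathcal{C}$ that is complete relative to $\mathcal{H}$ is injective in the positive monopole $\mathcal{C}$; (3) the injective objects of the positive monopole $\mathcal{C}$ are precisely the objects that are complete relative to $\mathcal{H}$.
   Context: A refinement of a category $\mathcal{C}$ is a subcategory containing all objects and all isomorphisms of $\mathcal{C}$. A (positive) monopole is a category $\mathcal{C}$ with a distinguished refinement $\mathcal{C}_+$ whose arrows are called positive. An object $x$ of a monopole is injective if for every positive arrow $g:a\to b$ and every arrow $f:a\to x$ there is an arrow $h:b\to x$ with $hg=f$; the monopole has enough injectives if every object $a$ admits a positive arrow $a\to x$ with $x$ injective. An object $z$ of a category is amphi-terminal if every object has at least one arrow to $z$ and $z$ has at most one arrow to any object. For a refinement $\mathcal{H}$ of $\mathcal{C}_+$ and an object $x$, let $x\downarrow_{\mathcal{H}}\mathcal{C}$ be the category whose objects are arrows $f:x\to a$ in $\mathcal{H}$, with morphisms from $f:x\to a$ to $g:x\to b$ the arrows $\xi:a\to b$ of $\mathcal{C}$ with $\xi f=g$. The object $x$ is complete relative to $\mathcal{H}$ if $1_x$ is an amphi-terminal object of $x\downarrow_{\mathcal{H}}\mathcal{C}$. For a category $\mathcal{E}$ and functor $U:\mathcal{E}\to\mathcal{C}$, let $x\downarrow_{\mathcal{H}}U$ have objects pairs $(b,f)$, $b\in\mathcal{E}$, $f:x\to Ub$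 in $\mathcal{H}$, and morphisms $(b,f)\to(c,g)$ the arrows $\varphi:b\to c$ of $\mathcal{E}$ with $U\varphi\circ f=g$. A capacitor for $\mathcal{C}$ is a triple $(\mathcal{H},\mathcal{E},U)$ with $\mathcal{H}$ a refinement of $\mathcal{C}_+$ and $U:\mathcal{E}\to\mathcal{C}$ faithful such that: (i) every object $x$ has a terminal object $(Jx,\eta_x:x\to UJx)$ of $x\downarrow_{\mathcal{H}}U$, and these give rise to a functor $J_+:\mathcal{C}_+^{\mathrm{op}}\to\mathcal{E}$ with $J_+x=Jx$ and $U(J_+f)\circ\eta_y\circ f=\eta_x$ for every $f:x\to y$ in $\mathcal{C}_+$; (ii) for every arrow $f:x\to y$ of $\mathcal{C}$ there is at most one arrow $\psi:Jx\to Jy$ of $\mathcal{E}$ with $U\psi\circ\eta_x=\eta_y\circ f$, and every arrow $h:UJx\to UJx$ with $h\circ\eta_x=\eta_x$ is the identity. *)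

theory Defs
  imports Main
begin

text \<open>A category is given by a set of objects, a set of arrows, domain and codomain
maps, identities and composition; Cmp g f denotes g \<circ> f.\<close>

record ('o, 'a) cat =
  Obj :: "'o set"
  Arr :: "'a set"
  Dm  :: "'a \<Rightarrow> 'o"
  Cd  :: "'a \<Rightarrow> 'o"
  Idn :: "'o \<Rightarrow> 'a"
  Cmp :: "'a \<Rightarrow> 'a \<Rightarrow> 'a"

definition category :: "('o, 'a) cat \<Rightarrow> bool" where
  "category C \<longleftrightarrow>
     (\<forall>f\<in>Arr C. Dm C f \<in> Obj C \<and> Cd C f \<in> Obj C) \<and>
     (\<forall>a\<in>Obj C. Idn C a \<in> Arr C \<and> Dm C (Idn C a) = a \<and> Cd C (Idn C a) = a) \<and>
     (\<forall>f\<in>Arr C. \<forall>g\<in>Arr C. Cd C f = Dm C g \<longrightarrow>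
        Cmp C g f \<in> Arr C \<and> Dm C (Cmp C g f) = Dm C f \<and> Cd C (Cmp C g f) = Cd C g) \<and>
     (\<forall>f\<in>Arr C. Cmp C f (Idn C (Dm C f)) = f \<and> Cmp C (Idn C (Cd C f)) f = f) \<and>
     (\<forall>f\<in>Arr C. \<forall>g\<in>Arr C. \<forall>h\<in>Arr C. Cd C f = Dm C g \<and> Cd C g = Dm C h \<longrightarrow>
        Cmp C h (Cmp C g f) = Cmp C (Cmp C h g) f)"

definition iso :: "('o, 'a) cat \<Rightarrow> 'a \<Rightarrow> bool" where
  "iso C f \<longleftrightarrow> f \<in> Arr C \<and> (\<exists>g\<in>Arr C. Dm C g = Cd C f \<and> Cd C g = Dm C f \<and>
     Cmp C g f = Idn C (Dm C f) \<and> Cmp C f g = Idn C (Cd C f))"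

definition op_cat :: "('o, 'a) cat \<Rightarrow> ('o, 'a) cat" where
  "op_cat C = \<lparr>Obj = Obj C, Arr = Arr C, Dm = Cd C, Cd = Dm C, Idn = Idn C,
              Cmp = (\<lambda>g f. Cmp C f g)\<rparr>"

definition wide_subcat :: "('o, 'a) cat \<Rightarrow> 'a set \<Rightarrow> bool" where
  "wide_subcat C S \<longleftrightarrow> S \<subseteq> Arr C \<and> (\<forall>a\<in>Obj C. Idn C a \<in> S) \<and>
     (\<forall>f\<in>S. \<forall>g\<in>S. Cd C f = Dm C g \<longrightarrow> Cmp C g f \<in> S)"

definition restrict_cat :: "('o, 'a) cat \<Rightarrow> 'a set \<Rightarrow> ('o, 'a) cat" where
  "restrict_cat C S = C\<lparr>Arr := S\<rparr>"

definition refinement :: "('o, 'a) cat \<Rightarrow> 'a set \<Rightarrow> bool" where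
  "refinement C S \<longleftrightarrow> wide_subcat C S \<and> (\<forall>f. iso C f \<longrightarrow> f \<in> S)"

text \<open>A (positive) monopole: a category C with distinguished refinement P of positive arrows.\<close>
definition monopole :: "('o, 'a) cat \<Rightarrow> 'a set \<Rightarrow> bool" where
  "monopole C P \<longleftrightarrow> category C \<and> refinement C P"

definition injective_obj :: "('o, 'a) cat \<Rightarrow> 'a set \<Rightarrow> 'o \<Rightarrow> bool" where
  "injective_obj C P x \<longleftrightarrow>
     (\<forall>g\<in>P. \<forall>f\<in>Arr C. Dm C f = Dm C g \<and> Cd C f = x \<longrightarrow>
        (\<exists>h\<in>Arr C. Dm C h = Cd C g \<and> Cd C h = x \<and> Cmp C h g = f))"

definition enough_injectives :: "('o, 'a) cat \<Rightarrow> 'a set \<Rightarrow> bool" where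
  "enough_injectives C P \<longleftrightarrow>
     (\<forall>a\<in>Obj C. \<exists>g\<in>P. Dm C g = a \<and> injective_obj C P (Cd C g))"

definition amphi_terminal :: "('o, 'a) cat \<Rightarrow> 'o \<Rightarrow> bool" where
  "amphi_terminal D z \<longleftrightarrow> z \<in> Obj D \<and>
     (\<forall>y\<in>Obj D. \<exists>u\<in>Arr D. Dm D u = y \<and> Cd D u = z) \<and>
     (\<forall>y\<in>Obj D. \<forall>u\<in>Arr D. \<forall>v\<in>Arr D.
        Dm D u = z \<and> Cd D u = y \<and> Dm D v = z \<and> Cd D v = y \<longrightarrow> u = v)"

definition terminal :: "('o, 'a) cat \<Rightarrow> 'o \<Rightarrow> bool" where
  "terminal D z \<longleftrightarrow> z \<in> Obj D \<and>
     (\<forall>y\<in>Obj D. \<exists>!u. u \<in> Arr D \<and> Dm D u = y \<and> Cd D u = z)"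

text \<open>The category x \<down>_H C: objects are arrows f : x \<rightarrow> a in H; a morphism
f \<rightarrow> g is an arrow \<xi> of C with \<xi> f = g, represented as the triple (f, \<xi>, g).\<close>
definition under_cat :: "('o, 'a) cat \<Rightarrow> 'a set \<Rightarrow> 'o \<Rightarrow> ('a, 'a \<times> 'a \<times> 'a) cat" where
  "under_cat C H x =
     \<lparr>Obj = {f\<in>H. Dm C f = x},
      Arr = {(f, \<xi>, g). f \<in> H \<and> Dm C f = x \<and> g \<in> H \<and> Dm C g = x \<and> \<xi> \<in> Arr C \<and>
                       Dm C \<xi> = Cd C f \<and> Cd C \<xi> = Cd C g \<and> Cmp C \<xi> f = g},
      Dm = (\<lambda>(f, \<xi>, g). f),
      Cd = (\<lambda>(f, \<xi>, g). g),
      Idn = (\<lambda>f. (f, Idn C (Cd C f), f)),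
      Cmp = (\<lambda>(g, \<eta>, h) (f, \<xi>, g'). (f, Cmp C \<eta> \<xi>, h))\<rparr>"

definition complete_rel :: "('o, 'a) cat \<Rightarrow> 'a set \<Rightarrow> 'o \<Rightarrow> bool" where
  "complete_rel C H x \<longleftrightarrow> amphi_terminal (under_cat C H x) (Idn C x)"

definition is_functor :: "('o, 'a) cat \<Rightarrow> ('p, 'b) cat \<Rightarrow> ('o \<Rightarrow> 'p) \<Rightarrow> ('a \<Rightarrow> 'b) \<Rightarrow> bool" where
  "is_functor C D Fo Fa \<longleftrightarrow>
     (\<forall>a\<in>Obj C. Fo a \<in> Obj D \<and> Fa (Idn C a) = Idn D (Fo a)) \<and>
     (\<forall>f\<in>Arr C. Fa f \<in> Arr D \<and> Dm D (Fa f) = Fo (Dm C f) \<and> Cd D (Fa f) = Fo (Cd C f)) \<and>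
     (\<forall>f\<in>Arr C. \<forall>g\<in>Arr C. Cd C f = Dm C g \<longrightarrow> Fa (Cmp C g f) = Cmp D (Fa g) (Fa f))"

definition faithful :: "('o, 'a) cat \<Rightarrow> ('a \<Rightarrow> 'b) \<Rightarrow> bool" where
  "faithful C Fa \<longleftrightarrow>
     (\<forall>f\<in>Arr C. \<forall>g\<in>Arr C. Dm C f = Dm C g \<and> Cd C f = Cd C g \<and> Fa f = Fa g \<longrightarrow> f = g)"

text \<open>The category x \<down>_H U: objects are pairs (b, f) with b an object of E and
f : x \<rightarrow> U b in H; a morphism (b,f) \<rightarrow> (c,g) is an arrow \<phi> : b \<rightarrow> c of E with
U \<phi> \<circ> f = g, represented as the triple ((b,f), \<phi>, (c,g)).\<close>
definition under_functor ::
  "('o, 'a) cat \<Rightarrow> 'a set \<Rightarrow> ('p, 'b) cat \<Rightarrow> ('p \<Rightarrow> 'o) \<Rightarrow> ('b \<Rightarrow> 'a) \<Rightarrow> 'o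
     \<Rightarrow> ('p \<times> 'a, ('p \<times> 'a) \<times> 'b \<times> ('p \<times> 'a)) cat" where
  "under_functor C H E Uo Ua x =
     \<lparr>Obj = {(b, f). b \<in> Obj E \<and> f \<in> H \<and> Dm C f = x \<and> Cd C f = Uo b},
      Arr = {((b, f), \<phi>, (c, g)). b \<in> Obj E \<and> f \<in> H \<and> Dm C f = x \<and> Cd C f = Uo b \<and>
                c \<in> Obj E \<and> g \<in> H \<and> Dm C g = x \<and> Cd C g = Uo c \<and>
                \<phi> \<in> Arr E \<and> Dm E \<phi> = b \<and> Cd E \<phi> = c \<and> Cmp C (Ua \<phi>) f = g},
      Dm = (\<lambda>(s, \<phi>, t). s),
      Cd = (\<lambda>(s, \<phi>, t). t),
      Idn = (\<lambda>(b, f). ((b, f), Idn E b, (b, f))),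
      Cmp = (\<lambda>(t, \<psi>, u) (s, \<phi>, t'). (s, Cmp E \<psi> \<phi>, u))\<rparr>"

definition capacitor ::
  "('o, 'a) cat \<Rightarrow> 'a set \<Rightarrow> 'a set \<Rightarrow> ('p, 'b) cat \<Rightarrow> ('p \<Rightarrow> 'o) \<Rightarrow> ('b \<Rightarrow> 'a) \<Rightarrow> bool" where
  "capacitor C P H E Uo Ua \<longleftrightarrow>
     refinement (restrict_cat C P) H \<and> category E \<and> is_functor E C Uo Ua \<and> faithful E Ua \<and>
     (\<exists>(J :: 'o \<Rightarrow> 'p) (\<eta> :: 'o \<Rightarrow> 'a) (Jp :: 'a \<Rightarrow> 'b).
        \<comment> \<open>(i)\<close>
        (\<forall>x\<in>Obj C. terminal (under_functor C H E Uo Ua x) (J x, \<eta> x)) \<and>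
        is_functor (op_cat (restrict_cat C P)) E J Jp \<and>
        (\<forall>f\<in>P. Cmp C (Cmp C (Ua (Jp f)) (\<eta> (Cd C f))) f = \<eta> (Dm C f)) \<and>
        \<comment> \<open>(ii)\<close>
        (\<forall>f\<in>Arr C. \<forall>\<psi>1\<in>Arr E. \<forall>\<psi>2\<in>Arr E.
           Dm E \<psi>1 = J (Dm C f) \<and> Cd E \<psi>1 = J (Cd C f) \<and>
           Cmp C (Ua \<psi>1) (\<eta> (Dm C f)) = Cmp C (\<eta> (Cd C f)) f \<and>
           Dm E \<psi>2 = J (Dm C f) \<and> Cd E \<psi>2 = J (Cd C f) \<and>
           Cmp C (Ua \<psi>2) (\<eta> (Dm C f)) = Cmp C (\<eta> (Cd C f)) f \<longrightarrow> \<psi>1 = \<psi>2) \<and>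
        (\<forall>x\<in>Obj C. \<forall>h\<in>Arr C. Dm C h = Uo (J x) \<and> Cd C h = Uo (J x) \<and>
           Cmp C h (\<eta> x) = \<eta> x \<longrightarrow> h = Idn C (Uo (J x))))"

end

theory Submission
  imports Defs
begin

text \<open>The unit \<eta> x : x \<rightarrow> U J x is positive, and U J x is always complete relative to H:
an H-arrow f : U J x \<rightarrow> b is split by U \<phi> \<circ> \<eta> b, where \<phi> : J b \<rightarrow> J x comes from the
terminality of (J x, \<eta> x), because the only endomorphism of U J x fixing \<eta> x is the identity.
If x admits a positive arrow g into an injective object z, extending g along \<eta> x and
composing with U (J g) \<circ> \<eta> z exhibits U J x as a retract of z, so U J x is injective;
a complete x is in turn a retract of U J x via \<eta> x. Injective objects are always complete.\<close>

lemma category_dom_cod: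
  "category C \<Longrightarrow> f \<in> Arr C \<Longrightarrow> Dm C f \<in> Obj C \<and> Cd C f \<in> Obj C"
  unfolding category_def by blast

lemma category_id:
  "category C \<Longrightarrow> a \<in> Obj C \<Longrightarrow> Idn C a \<in> Arr C \<and> Dm C (Idn C a) = a \<and> Cd C (Idn C a) = a"
  unfolding category_def by blast

lemma category_comp:
  "category C \<Longrightarrow> f \<in> Arr C \<Longrightarrow> g \<in> Arr C \<Longrightarrow> Cd C f = Dm C g \<Longrightarrow>
    Cmp C g f \<in> Arr C \<and> Dm C (Cmp C g f) = Dm C f \<and> Cd C (Cmp C g f) = Cd C g"
  unfolding category_def by blast

lemma category_comp_id: "category C \<Longrightarrow> f \<in> Arr C \<Longrightarrow> Cmp C f (Idn C (Dm C f)) = f"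
  unfolding category_def by blast

lemma category_id_comp: "category C \<Longrightarrow> f \<in> Arr C \<Longrightarrow> Cmp C (Idn C (Cd C f)) f = f"
  unfolding category_def by blast

lemma category_assoc:
  "category C \<Longrightarrow> f \<in> Arr C \<Longrightarrow> g \<in> Arr C \<Longrightarrow> h \<in> Arr C \<Longrightarrow>
    Cd C f = Dm C g \<Longrightarrow> Cd C g = Dm C h \<Longrightarrow> Cmp C h (Cmp C g f) = Cmp C (Cmp C h g) f"
  unfolding category_def by blast

lemma complete_rel_iff:
  assumes C: "category C" and x: "x \<in> Obj C" and "Idn C x \<in> H"
  shows "complete_rel C H x \<longleftrightarrow>
    (\<forall>f\<in>H. Dm C f = x \<longrightarrow> (\<exists>\<xi>\<in>Arr C. Dm C \<xi> = Cd C f \<and> Cd C \<xi> = x \<and> Cmp C \<xi> f = Idn C x))"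
    (is "_ \<longleftrightarrow> ?retractions")
proof
  let ?D = "under_cat C H x"
  assume "complete_rel C H x"
  then have arrows_to_id: "\<exists>u\<in>Arr ?D. Dm ?D u = f \<and> Cd ?D u = Idn C x" if "f \<in> Obj ?D" for f
    using that unfolding complete_rel_def amphi_terminal_def by blast
  show ?retractions
  proof (intro ballI impI)
    fix f assume "f \<in> H" "Dm C f = x"
    then have "f \<in> Obj ?D" by (simp add: under_cat_def)
    then obtain u where "u \<in> Arr ?D" "Dm ?D u = f" "Cd ?D u = Idn C x"
      using arrows_to_id by blast
    then show "\<exists>\<xi>\<in>Arr C. Dm C \<xi> = Cd C f \<and> Cd C \<xi> = x \<and> Cmp C \<xi> f = Idn C x"
      using category_id[OF C x] by (auto simp: under_cat_def)
  qed
next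
  let ?D = "under_cat C H x"
  assume ?retractions
  have "\<exists>u\<in>Arr ?D. Dm ?D u = f \<and> Cd ?D u = Idn C x" if "f \<in> Obj ?D" for f
  proof -
    have f: "f \<in> H" "Dm C f = x" using that by (auto simp: under_cat_def)
    with \<open>?retractions\<close> obtain \<xi> where
      "\<xi> \<in> Arr C" "Dm C \<xi> = Cd C f" "Cd C \<xi> = x" "Cmp C \<xi> f = Idn C x"
      by blast
    then have "(f, \<xi>, Idn C x) \<in> Arr ?D"
      using f assms category_id[OF C x] by (simp add: under_cat_def)
    then show ?thesis by (force simp: under_cat_def)
  qed
  moreover have "\<xi> = Cmp C \<xi> (Idn C x)" if "\<xi> \<in> Arr C" "Dm C \<xi> = x" for \<xi>
    using category_comp_id[OF C that(1)] that(2) by simp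
  \<comment> \<open>hence a morphism of x \<down> C out of the identity is determined by its target\<close>
  then have "\<forall>y\<in>Obj ?D. \<forall>u\<in>Arr ?D. \<forall>v\<in>Arr ?D.
      Dm ?D u = Idn C x \<and> Cd ?D u = y \<and> Dm ?D v = Idn C x \<and> Cd ?D v = y \<longrightarrow> u = v"
    using category_id[OF C x] by (auto simp: under_cat_def)
  moreover have "Idn C x \<in> Obj ?D"
    using assms category_id[OF C x] by (simp add: under_cat_def)
  ultimately show "complete_rel C H x"
    unfolding complete_rel_def amphi_terminal_def by blast
qed

lemma injective_obj_retract:
  assumes C: "category C" and "P \<subseteq> Arr C" and y: "injective_obj C P y"
    and i: "i \<in> Arr C" "Dm C i = x" "Cd C i = y"
    and r: "r \<in> Arr C" "Dm C r = y" "Cd C r = x"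
    and retraction: "Cmp C r i = Idn C x"
  shows "injective_obj C P x"
  unfolding injective_obj_def
proof (intro ballI impI)
  fix g f assume g: "g \<in> P" and f: "f \<in> Arr C" "Dm C f = Dm C g \<and> Cd C f = x"
  have "g \<in> Arr C" using g \<open>P \<subseteq> Arr C\<close> by blast
  have "Cmp C i f \<in> Arr C \<and> Dm C (Cmp C i f) = Dm C g \<and> Cd C (Cmp C i f) = y"
    using category_comp[OF C f(1) i(1)] f i by auto
  then obtain h where h: "h \<in> Arr C" "Dm C h = Cd C g" "Cd C h = y" "Cmp C h g = Cmp C i f"
    using y g unfolding injective_obj_def by metis
  have "Cmp C (Cmp C r h) g = Cmp C r (Cmp C h g)"
    using category_assoc[OF C \<open>g \<in> Arr C\<close> h(1) r(1)] h r by auto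
  also have "\<dots> = Cmp C (Cmp C r i) f"
    using h(4) category_assoc[OF C f(1) i(1) r(1)] f i r by auto
  also have "\<dots> = f"
    using retraction f category_id_comp[OF C f(1)] by simp
  finally show "\<exists>h\<in>Arr C. Dm C h = Cd C g \<and> Cd C h = x \<and> Cmp C h g = f"
    using category_comp[OF C h(1) r(1)] h r by (intro bexI[of _ "Cmp C r h"]) auto
qed

lemma injective_obj_imp_complete_rel:
  assumes C: "category C" and "H \<subseteq> P" and x: "x \<in> Obj C" and "Idn C x \<in> H"
    and "injective_obj C P x"
  shows "complete_rel C H x"
  using assms category_id[OF C x]
  by (subst complete_rel_iff) (auto simp: injective_obj_def)

locale capacitor_structure =
  fixes C :: "('o, 'a) cat" and P H :: "'a set"
    and E :: "('p, 'b) cat" and Uo :: "'p \<Rightarrow> 'o" and Ua :: "'b \<Rightarrow> 'a"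
    and J :: "'o \<Rightarrow> 'p" and \<eta> :: "'o \<Rightarrow> 'a" and Jp :: "'a \<Rightarrow> 'b"
  assumes monopole: "monopole C P"
    and H_refinement: "refinement (restrict_cat C P) H"
    and U_functor: "is_functor E C Uo Ua"
    and unit_terminal: "x \<in> Obj C \<Longrightarrow> terminal (under_functor C H E Uo Ua x) (J x, \<eta> x)"
    and J_functor: "is_functor (op_cat (restrict_cat C P)) E J Jp"
    and unit_natural: "f \<in> P \<Longrightarrow> Cmp C (Cmp C (Ua (Jp f)) (\<eta> (Cd C f))) f = \<eta> (Dm C f)"
    and unit_rigid: "\<lbrakk>x \<in> Obj C; h \<in> Arr C; Dm C h = Uo (J x); Cd C h = Uo (J x);
      Cmp C h (\<eta> x) = \<eta> x\<rbrakk> \<Longrightarrow> h = Idn C (Uo (J x))"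

lemma capacitor_imp_capacitor_structure:
  assumes "monopole C P" and "capacitor C P H E Uo Ua"
  obtains J \<eta> Jp where "capacitor_structure C P H E Uo Ua J \<eta> Jp"
proof -
  obtain J \<eta> Jp where
    "\<forall>x\<in>Obj C. terminal (under_functor C H E Uo Ua x) (J x, \<eta> x)"
    "is_functor (op_cat (restrict_cat C P)) E J Jp"
    "\<forall>f\<in>P. Cmp C (Cmp C (Ua (Jp f)) (\<eta> (Cd C f))) f = \<eta> (Dm C f)"
    "\<forall>x\<in>Obj C. \<forall>h\<in>Arr C. Dm C h = Uo (J x) \<and> Cd C h = Uo (J x) \<and>
       Cmp C h (\<eta> x) = \<eta> x \<longrightarrow> h = Idn C (Uo (J x))"
    using assms(2) unfolding capacitor_def by (elim conjE exE) (rule that; assumption)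
  with assms show thesis
    by (intro that[of J \<eta> Jp]) (simp add: capacitor_structure_def capacitor_def)
qed

context capacitor_structure
begin

lemma category: "category C"
  using monopole by (simp add: monopole_def)

lemma positive_arr: "P \<subseteq> Arr C"
  using monopole by (simp add: monopole_def refinement_def wide_subcat_def)

lemma H_positive: "H \<subseteq> P"
  and H_id: "a \<in> Obj C \<Longrightarrow> Idn C a \<in> H"
  and H_comp: "f \<in> H \<Longrightarrow> g \<in> H \<Longrightarrow> Cd C f = Dm C g \<Longrightarrow> Cmp C g f \<in> H"
  using H_refinement by (auto simp: refinement_def wide_subcat_def restrict_cat_def)

lemma H_arr: "f \<in> H \<Longrightarrow> f \<in> Arr C"
  using H_positive positive_arr by blast

lemma U_arr: "\<phi> \<in> Arr E \<Longrightarrow> Ua \<phi> \<in> Arr C \<and> Dm C (Ua \<phi>) = Uo (Dm E \<phi>) \<and> Cd C (Ua \<phi>) = Uo (Cd E \<phi>)"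
  and U_obj: "c \<in> Obj E \<Longrightarrow> Uo c \<in> Obj C"
  using U_functor unfolding is_functor_def by auto

lemma J_arr: "f \<in> P \<Longrightarrow> Jp f \<in> Arr E \<and> Dm E (Jp f) = J (Cd C f) \<and> Cd E (Jp f) = J (Dm C f)"
  using J_functor unfolding is_functor_def by (auto simp: op_cat_def restrict_cat_def)

lemma unit: "x \<in> Obj C \<Longrightarrow> J x \<in> Obj E \<and> \<eta> x \<in> H \<and> Dm C (\<eta> x) = x \<and> Cd C (\<eta> x) = Uo (J x)"
  using unit_terminal unfolding terminal_def by (auto simp: under_functor_def)

lemma unit_universal:
  assumes x: "x \<in> Obj C" and "c \<in> Obj E" "g \<in> H" "Dm C g = x" "Cd C g = Uo c"
  obtains \<phi> where "\<phi> \<in> Arr E" "Dm E \<phi> = c" "Cd E \<phi> = J x" "Cmp C (Ua \<phi>) g = \<eta> x"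
proof -
  let ?D = "under_functor C H E Uo Ua x"
  have "(c, g) \<in> Obj ?D" using assms by (simp add: under_functor_def)
  then obtain u where "u \<in> Arr ?D" "Dm ?D u = (c, g)" "Cd ?D u = (J x, \<eta> x)"
    using unit_terminal[OF x] unfolding terminal_def by blast
  then show ?thesis using that by (auto simp: under_functor_def)
qed

lemma complete_rel_UJ:
  assumes x: "x \<in> Obj C"
  shows "complete_rel C H (Uo (J x))"
proof -
  let ?y = "Uo (J x)"
  have ux: "J x \<in> Obj E" "\<eta> x \<in> H" "Dm C (\<eta> x) = x" "Cd C (\<eta> x) = ?y"
    using unit[OF x] by auto
  have y: "?y \<in> Obj C" using U_obj ux(1) by blast
  show ?thesis
  proof (subst complete_rel_iff[OF category y H_id[OF y]], intro ballI impI)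
    fix f assume f: "f \<in> H" "Dm C f = ?y"
    define b where "b = Cd C f"
    have "f \<in> Arr C" using f H_arr by blast
    then have b: "b \<in> Obj C" using category_dom_cod[OF category] b_def by simp
    have ub: "J b \<in> Obj E" "\<eta> b \<in> H" "Dm C (\<eta> b) = b" "Cd C (\<eta> b) = Uo (J b)"
      using unit[OF b] by auto
    have fx: "Cmp C f (\<eta> x) \<in> Arr C" "Dm C (Cmp C f (\<eta> x)) = x" "Cd C (Cmp C f (\<eta> x)) = b"
      using category_comp[OF category H_arr[OF ux(2)] \<open>f \<in> Arr C\<close>] ux f b_def by auto
    define g where "g = Cmp C (\<eta> b) (Cmp C f (\<eta> x))"
    have g: "g \<in> H" "Dm C g = x" "Cd C g = Uo (J b)"
      using H_comp[OF H_comp[OF ux(2) f(1)] ub(2)] category_comp[OF category fx(1) H_arr[OF ub(2)]]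
        ux f fx ub b_def unfolding g_def by auto
    obtain \<phi> where \<phi>: "\<phi> \<in> Arr E" "Dm E \<phi> = J b" "Cd E \<phi> = J x" "Cmp C (Ua \<phi>) g = \<eta> x"
      using unit_universal[OF x ub(1) g] .
    have U\<phi>: "Ua \<phi> \<in> Arr C" "Dm C (Ua \<phi>) = Uo (J b)" "Cd C (Ua \<phi>) = ?y"
      using U_arr[OF \<phi>(1)] \<phi> by auto
    define \<xi> where "\<xi> = Cmp C (Ua \<phi>) (\<eta> b)"
    have \<xi>: "\<xi> \<in> Arr C" "Dm C \<xi> = b" "Cd C \<xi> = ?y"
      using category_comp[OF category H_arr[OF ub(2)] U\<phi>(1)] U\<phi> ub unfolding \<xi>_def by auto
    have "Cmp C (Cmp C \<xi> f) (\<eta> x) = Cmp C \<xi> (Cmp C f (\<eta> x))"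
      using category_assoc[OF category H_arr[OF ux(2)] \<open>f \<in> Arr C\<close> \<xi>(1)] ux f \<xi> b_def by auto
    also have "\<dots> = Cmp C (Ua \<phi>) g"
      unfolding \<xi>_def g_def
      using category_assoc[OF category fx(1) H_arr[OF ub(2)] U\<phi>(1)] fx ub U\<phi> by auto
    also have "\<dots> = \<eta> x" by (rule \<phi>(4))
    finally have "Cmp C \<xi> f = Idn C ?y"
      using unit_rigid[OF x] category_comp[OF category \<open>f \<in> Arr C\<close> \<xi>(1)] \<xi> f b_def by simp
    then show "\<exists>\<xi>\<in>Arr C. Dm C \<xi> = Cd C f \<and> Cd C \<xi> = ?y \<and> Cmp C \<xi> f = Idn C ?y"
      using \<xi> b_def by blast
  qed
qed

lemma injective_UJ:
  assumes g: "g \<in> P" and inj: "injective_obj C P (Cd C g)"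
  shows "injective_obj C P (Uo (J (Dm C g)))"
proof -
  define x y z where "x = Dm C g" and "y = Uo (J x)" and "z = Cd C g"
  have "g \<in> Arr C" using g positive_arr by blast
  then have x: "x \<in> Obj C" and "z \<in> Obj C"
    using category_dom_cod[OF category] x_def z_def by auto
  have ux: "\<eta> x \<in> P" "\<eta> x \<in> Arr C" "Dm C (\<eta> x) = x" "Cd C (\<eta> x) = y"
    using unit[OF x] H_positive H_arr y_def by auto
  have uz: "\<eta> z \<in> Arr C" "Dm C (\<eta> z) = z" "Cd C (\<eta> z) = Uo (J z)"
    using unit[OF \<open>z \<in> Obj C\<close>] H_arr by auto
  obtain k where k: "k \<in> Arr C" "Dm C k = y" "Cd C k = z" "Cmp C k (\<eta> x) = g"
    using inj ux \<open>g \<in> Arr C\<close> unfolding injective_obj_def x_def z_def by metis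
  define r where "r = Cmp C (Ua (Jp g)) (\<eta> z)"
  have r: "r \<in> Arr C" "Dm C r = z" "Cd C r = y"
    using category_comp[OF category uz(1)] U_arr J_arr[OF g] uz unfolding r_def x_def y_def z_def
    by auto
  have "Cmp C (Cmp C r k) (\<eta> x) = Cmp C r g"
    using category_assoc[OF category ux(2) k(1) r(1)] ux k r by auto
  also have "\<dots> = \<eta> x"
    using unit_natural[OF g] unfolding r_def x_def z_def .
  finally have "Cmp C r k = Idn C y"
    using unit_rigid[OF x] category_comp[OF category k(1) r(1)] k r y_def by simp
  then show ?thesis
    using injective_obj_retract[OF category positive_arr inj[folded z_def] k(1-3) r] x_def y_def
    by simp
qed

lemma injective_imp_complete_rel:
  "x \<in> Obj C \<Longrightarrow> injective_obj C P x \<Longrightarrow> complete_rel C H x"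
  using injective_obj_imp_complete_rel[OF category H_positive _ H_id] by blast

lemma complete_rel_imp_injective:
  assumes "enough_injectives C P" and x: "x \<in> Obj C" and "complete_rel C H x"
  shows "injective_obj C P x"
proof -
  obtain g where "g \<in> P" "Dm C g = x" "injective_obj C P (Cd C g)"
    using assms(1) x unfolding enough_injectives_def by blast
  then have "injective_obj C P (Uo (J x))" using injective_UJ by blast
  moreover obtain \<xi> where "\<xi> \<in> Arr C" "Dm C \<xi> = Uo (J x)" "Cd C \<xi> = x" "Cmp C \<xi> (\<eta> x) = Idn C x"
    using assms(3) unit[OF x] complete_rel_iff[OF category x H_id[OF x]] by metis
  ultimately show ?thesis
    using injective_obj_retract[OF category positive_arr] unit[OF x] H_arr by blast
qed

lemma enough_injectives_iff:
  "enough_injectives C P \<longleftrightarrow> (\<forall>x\<in>Obj C. complete_rel C H x \<longrightarrow> injective_obj C P x)"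
proof
  assume "enough_injectives C P"
  then show "\<forall>x\<in>Obj C. complete_rel C H x \<longrightarrow> injective_obj C P x"
    using complete_rel_imp_injective by blast
next
  assume complete_injective: "\<forall>x\<in>Obj C. complete_rel C H x \<longrightarrow> injective_obj C P x"
  show "enough_injectives C P"
    unfolding enough_injectives_def
  proof
    fix a assume a: "a \<in> Obj C"
    have "injective_obj C P (Uo (J a))"
      using complete_injective complete_rel_UJ[OF a] U_obj unit[OF a] by blast
    then show "\<exists>g\<in>P. Dm C g = a \<and> injective_obj C P (Cd C g)"
      using unit[OF a] H_positive by (intro bexI[of _ "\<eta> a"]) auto
  qed
qed

end

theorem mainTheorem2:
  fixes C :: "('o, 'a) cat" and P H :: "'a set"
    and E :: "('p, 'b) cat" and Uo :: "'p \<Rightarrow> 'o" and Ua :: "'b \<Rightarrow> 'a"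
  assumes "monopole C P"
    and "capacitor C P H E Uo Ua"
  shows "(enough_injectives C P \<longleftrightarrow>
            (\<forall>x\<in>Obj C. complete_rel C H x \<longrightarrow> injective_obj C P x))
       \<and> ((\<forall>x\<in>Obj C. complete_rel C H x \<longrightarrow> injective_obj C P x) \<longleftrightarrow>
            (\<forall>x\<in>Obj C. injective_obj C P x \<longleftrightarrow> complete_rel C H x))"
proof -
  obtain J \<eta> Jp where "capacitor_structure C P H E Uo Ua J \<eta> Jp"
    using capacitor_imp_capacitor_structure[OF assms] .
  then interpret capacitor_structure C P H E Uo Ua J \<eta> Jp .
  show ?thesis
    using enough_injectives_iff injective_imp_complete_rel by blast
qed

end
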